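(* Let $d\ge 2$, $2\le k\le d+1$, let $y_1,\dots,y_N\in\{1,\dots,k\}$ be labels of a class-balanced dataset (each class has exactly $N/k\ge 1$ samples), and let $s>0$. For $\boldsymbol w_1,\dots,\boldsymbol w_k,\boldsymbol z_1,\dots,\boldsymbol z_N\in\mathbb S^{d-1}$ let $\theta_{ij}=\arccos(\boldsymbol w_j^{\mathrm T}\boldsymbol z_i)\in[0,\pi]$, and for a function $f:[0,\pi]\to\mathbb R$ define the empirical risk $$L_f=\frac1N\sum_{i=1}^N-\log\frac{\exp(s f(\theta_{iy_i}))}{\exp(s f(\theta_{iy_i}))+\sum_{j\ne y_i}\exp(s\cos\theta_{ij})}.$$ Consider the following choices of $f$: (NormFace) $f(\theta)=\cos\theta$; (CosFace / AM-Softmax) $f(\theta)=\cos\theta-m$ with $m\ge0$; (ArcFace) $f(\theta)=\cos(\theta+m)$ with $m\in[0,\pi/2]$ and $\cos m\ge\frac12$; (A-Softmax with feature normalization) $f(\theta)=(-1)^\ell\cos(m\theta)-2\ell$ for $\theta\in[\ell\pi/m,(\ell+1)\pi/m]$, $\ell=0,\dots,m-1$, with $m\ge1$ an integer. Then for each of these losses, the set of minimizers of $L_f$ over $(\mathbb S^{d-1})^{k+N}$ is exactly the set of configurations with $\boldsymbol w_i^{\mathrm T}\boldsymbol w_j=-\frac1{k-1}$ for all $i\ne j$ and $\boldsymbol z_i=\boldsymbol w_{y_i}$ for all $i$; in particular all these losses share the same optimal solutions.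
   Context: $\mathbb S^{d-1}$ is the unit sphere in $\mathbb R^d$; $\boldsymbol w_j$ are class prototypes and $\boldsymbol z_i$ is the feature of a sample with label $y_i$. *)

theory Defs
  imports "HOL-Analysis.Analysis"
begin

definition emp_risk ::
  "(real \<Rightarrow> real) \<Rightarrow> real \<Rightarrow> nat \<Rightarrow> nat \<Rightarrow> (nat \<Rightarrow> nat)
     \<Rightarrow> (nat \<Rightarrow> real^'n::finite) \<Rightarrow> (nat \<Rightarrow> real^'n) \<Rightarrow> real" where
  "emp_risk f s k N y w z =
     (1 / real N) * (\<Sum>i\<in>{1..N}.
        - ln (exp (s * f (arccos (w (y i) \<bullet> z i))) /
              (exp (s * f (arccos (w (y i) \<bullet> z i)))
               + (\<Sum>j\<in>{1..k} - {y i}. exp (s * cos (arccos (w j \<bullet> z i)))))))"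

definition on_sphere :: "nat \<Rightarrow> nat \<Rightarrow> (nat \<Rightarrow> real^'n::finite) \<Rightarrow> (nat \<Rightarrow> real^'n) \<Rightarrow> bool" where
  "on_sphere k N w z \<longleftrightarrow> (\<forall>j\<in>{1..k}. norm (w j) = 1) \<and> (\<forall>i\<in>{1..N}. norm (z i) = 1)"

definition is_minimizer ::
  "(real \<Rightarrow> real) \<Rightarrow> real \<Rightarrow> nat \<Rightarrow> nat \<Rightarrow> (nat \<Rightarrow> nat)
     \<Rightarrow> (nat \<Rightarrow> real^'n::finite) \<Rightarrow> (nat \<Rightarrow> real^'n) \<Rightarrow> bool" where
  "is_minimizer f s k N y w z \<longleftrightarrow> on_sphere k N w z \<and>
     (\<forall>(w'::nat \<Rightarrow> real^'n) z'. on_sphere k N w' z' \<longrightarrow>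
        emp_risk f s k N y w z \<le> emp_risk f s k N y w' z')"

definition normface :: "real \<Rightarrow> real" where
  "normface \<theta> = cos \<theta>"

definition cosface :: "real \<Rightarrow> real \<Rightarrow> real" where
  "cosface m \<theta> = cos \<theta> - m"

definition arcface :: "real \<Rightarrow> real \<Rightarrow> real" where
  "arcface m \<theta> = cos (\<theta> + m)"

text \<open>A-Softmax: on [l pi/m, (l+1) pi/m], l = 0..m-1, f = (-1)^l cos(m theta) - 2 l.
  The pieces agree at the breakpoints, so choosing l = min (m-1) (floor (m theta / pi))
  gives the intended function on [0, pi].\<close>
definition asoftmax :: "nat \<Rightarrow> real \<Rightarrow> real" where
  "asoftmax m \<theta> = (let l = min (m - 1) (nat \<lfloor>real m * \<theta> / pi\<rfloor>) in
      (-1) ^ l * cos (real m * \<theta>) - 2 * real l)"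

end

theory Submission
  imports Defs
begin

(*
  The loss of sample i is ln (1 + sum_{j ~= y_i} exp (s (w_j . z_i - f theta_i))).  Jensen's
  inequality for exp over the k - 1 wrong classes, followed by the tangent line of
  x |-> ln (1 + (k - 1) e^x) at the value attained by a simplex ETF, bounds the risk from below
  by that value plus a positive multiple of the excess of the summed mean logit gaps over their
  least possible value.  Every margin function considered satisfies
  f theta <= f 0 - (1 - cos theta) / 2, and this reduces the nonnegativity of the excess to
  sum_i (S - alpha w_{y_i}) . z_i >= - N alpha, where S = sum_j w_j and alpha = (k + 1) / 2.
  That inequality follows from Cauchy-Schwarz, class balance and AM-GM, with equality only if
  S = 0 and z_i = w_{y_i}.  Equality in Jensen's inequality then makes the products
  w_j . w_{y_i}, j ~= y_i, all equal, hence equal to -1 / (k - 1).  A simplex ETF exists as soon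
  as the dimension is at least k - 1.
*)

section \<open>Jensen's inequality for exp and tangents of the softplus\<close>

lemma exp_tangent_le: "exp \<mu> * (1 + (x - \<mu>)) \<le> exp (x::real)"
  and exp_tangent_eq_iff: "exp \<mu> * (1 + (x - \<mu>)) = exp x \<longleftrightarrow> x = \<mu>"
proof -
  have "exp x = exp \<mu> * exp (x - \<mu>)"
    by (simp add: exp_diff)
  moreover have "1 + (x - \<mu>) < exp (x - \<mu>) \<longleftrightarrow> x \<noteq> \<mu>"
    using exp_minus_greater[of "\<mu> - x"] by (auto simp: algebra_simps)
  ultimately show "exp \<mu> * (1 + (x - \<mu>)) \<le> exp x" "exp \<mu> * (1 + (x - \<mu>)) = exp x \<longleftrightarrow> x = \<mu>"
    by (auto simp: less_le)
qed

lemma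
  fixes u :: "'a \<Rightarrow> real"
  assumes "finite J" "J \<noteq> {}"
  defines "\<mu> \<equiv> sum u J / card J"
  shows card_mult_exp_mean_le_sum_exp: "card J * exp \<mu> \<le> (\<Sum>j\<in>J. exp (u j))"
    and sum_exp_eq_card_mult_exp_mean_imp:
      "(\<Sum>j\<in>J. exp (u j)) = card J * exp \<mu> \<Longrightarrow> j \<in> J \<Longrightarrow> u j = \<mu>"
proof -
  have "(\<Sum>j\<in>J. exp \<mu> * (1 + (u j - \<mu>))) = exp \<mu> * (card J + sum u J - card J * \<mu>)"
    by (simp add: sum_distrib_left[symmetric] sum.distrib sum_subtractf)
  also have "\<dots> = card J * exp \<mu>"
    using assms by (simp add: \<mu>_def)
  finally have tangent_sum: "(\<Sum>j\<in>J. exp \<mu> * (1 + (u j - \<mu>))) = card J * exp \<mu>" .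
  moreover have "(\<Sum>j\<in>J. exp \<mu> * (1 + (u j - \<mu>))) \<le> (\<Sum>j\<in>J. exp (u j))"
    by (intro sum_mono exp_tangent_le)
  ultimately show "card J * exp \<mu> \<le> (\<Sum>j\<in>J. exp (u j))"
    by simp
  assume "(\<Sum>j\<in>J. exp (u j)) = card J * exp \<mu>" "j \<in> J"
  then have "exp \<mu> * (1 + (u j - \<mu>)) = exp (u j)"
    using sum_mono_inv[of "\<lambda>j. exp \<mu> * (1 + (u j - \<mu>))" J "\<lambda>j. exp (u j)" j]
      tangent_sum exp_tangent_le \<open>finite J\<close> by simp
  then show "u j = \<mu>"
    by (simp add: exp_tangent_eq_iff)
qed

lemma ln_one_plus_exp_above_tangent:
  fixes K x x\<^sub>0 :: real
  assumes "0 < K"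
  shows "ln (1 + K * exp x\<^sub>0) + K * exp x\<^sub>0 / (1 + K * exp x\<^sub>0) * (x - x\<^sub>0) \<le> ln (1 + K * exp x)"
proof -
  define p where "p = K * exp x\<^sub>0 / (1 + K * exp x\<^sub>0)"
  have denom: "0 < 1 + K * exp t" for t
    using assms by (simp add: add_pos_pos)
  have p: "0 \<le> p" "p \<le> 1"
    using assms denom by (simp_all add: p_def divide_le_eq_1)
  have "exp (p * (x - x\<^sub>0)) \<le> (1 - p) * exp 0 + p * exp (x - x\<^sub>0)"
    using convex_onD[OF exp_convex, of p 0 "x - x\<^sub>0"] p by simp
  also have "\<dots> = (1 + K * exp x) / (1 + K * exp x\<^sub>0)"
    using denom[of x\<^sub>0] by (simp add: p_def exp_diff field_simps)
  finally have "p * (x - x\<^sub>0) \<le> ln ((1 + K * exp x) / (1 + K * exp x\<^sub>0))"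
    using denom[of x] denom[of x\<^sub>0] by (simp add: ln_ge_iff)
  then show ?thesis
    using denom[of x] denom[of x\<^sub>0] by (simp add: p_def ln_div)
qed

lemma ln_one_plus_sum_exp_above_tangent:
  fixes u :: "'a \<Rightarrow> real" and x\<^sub>0 :: real
  assumes "finite J" "J \<noteq> {}"
  defines "K \<equiv> real (card J)" and "\<mu> \<equiv> sum u J / card J"
  defines "tangent \<equiv> ln (1 + K * exp x\<^sub>0) + K * exp x\<^sub>0 / (1 + K * exp x\<^sub>0) * (\<mu> - x\<^sub>0)"
  shows "tangent \<le> ln (1 + (\<Sum>j\<in>J. exp (u j)))"
    and "ln (1 + (\<Sum>j\<in>J. exp (u j))) = tangent \<Longrightarrow> j \<in> J \<Longrightarrow> u j = \<mu>"
proof -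
  have "0 < K"
    using assms by (simp add: K_def card_gt_0_iff)
  then have "tangent \<le> ln (1 + K * exp \<mu>)"
    unfolding tangent_def by (rule ln_one_plus_exp_above_tangent)
  also have jensen: "ln (1 + K * exp \<mu>) \<le> ln (1 + (\<Sum>j\<in>J. exp (u j)))"
    using card_mult_exp_mean_le_sum_exp[OF assms(1,2), of u] \<open>0 < K\<close>
    by (intro ln_mono) (simp_all add: K_def \<mu>_def add_pos_pos)
  finally show "tangent \<le> ln (1 + (\<Sum>j\<in>J. exp (u j)))" .
  assume "ln (1 + (\<Sum>j\<in>J. exp (u j))) = tangent" "j \<in> J"
  with \<open>tangent \<le> ln (1 + K * exp \<mu>)\<close> jensen have "ln (1 + K * exp \<mu>) = ln (1 + (\<Sum>j\<in>J. exp (u j)))"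
    by linarith
  then have "(\<Sum>j\<in>J. exp (u j)) = card J * exp \<mu>"
    using \<open>0 < K\<close> by (simp add: K_def add_pos_nonneg sum_nonneg)
  then show "u j = \<mu>"
    using sum_exp_eq_card_mult_exp_mean_imp[OF assms(1,2)] \<open>j \<in> J\<close> by (simp add: \<mu>_def)
qed

section \<open>Class-balanced sums of inner products\<close>

lemma sum_over_balanced_labels:
  fixes g :: "nat \<Rightarrow> 'a::comm_semiring_1" and y :: "nat \<Rightarrow> nat" and N k n :: nat
  assumes labels: "\<forall>i\<in>{1..N}. y i \<in> {1..k}"
    and class_size: "\<forall>c\<in>{1..k}. card {i\<in>{1..N}. y i = c} = n"
  shows "(\<Sum>i\<in>{1..N}. g (y i)) = of_nat n * (\<Sum>c\<in>{1..k}. g c)"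
proof -
  have "(\<Sum>i\<in>{1..N}. g (y i)) = (\<Sum>c\<in>{1..k}. \<Sum>i\<in>{i\<in>{1..N}. y i = c}. g (y i))"
    by (rule sum.group[symmetric]) (use labels in auto)
  also have "\<dots> = (\<Sum>c\<in>{1..k}. of_nat n * g c)"
    using class_size by (intro sum.cong) auto
  finally show ?thesis
    by (simp add: sum_distrib_left)
qed

lemma sum_norm_diff_scaleR_le:
  fixes w :: "'i \<Rightarrow> 'a::real_inner" and \<alpha> :: real
  assumes "finite C" and unit: "\<forall>c\<in>C. norm (w c) = 1" and "0 < \<alpha>"
  defines "S \<equiv> sum w C"
  shows "(\<Sum>c\<in>C. norm (S - \<alpha> *\<^sub>R w c))
           \<le> card C * \<alpha> - (2 * \<alpha> - card C) * (S \<bullet> S) / (2 * \<alpha>)"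
proof -
  have am_gm: "norm (S - \<alpha> *\<^sub>R w c) \<le> ((S - \<alpha> *\<^sub>R w c) \<bullet> (S - \<alpha> *\<^sub>R w c) + \<alpha>\<^sup>2) / (2 * \<alpha>)" for c
    using \<open>0 < \<alpha>\<close> sum_squares_bound[of "norm (S - \<alpha> *\<^sub>R w c)" \<alpha>]
    by (simp add: field_simps power2_norm_eq_inner)
  have "(\<Sum>c\<in>C. (S - \<alpha> *\<^sub>R w c) \<bullet> (S - \<alpha> *\<^sub>R w c))
          = (\<Sum>c\<in>C. S \<bullet> S - 2 * \<alpha> * (S \<bullet> w c) + \<alpha>\<^sup>2)"
    using unit by (intro sum.cong) (auto simp: inner_diff inner_commute power2_eq_square norm_eq_1)
  also have "\<dots> = card C * (S \<bullet> S) - 2 * \<alpha> * (S \<bullet> S) + card C * \<alpha>\<^sup>2"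
    by (simp add: sum.distrib sum_subtractf sum_distrib_left[symmetric] inner_sum_right S_def)
  finally have sum_sq: "(\<Sum>c\<in>C. (S - \<alpha> *\<^sub>R w c) \<bullet> (S - \<alpha> *\<^sub>R w c))
          = card C * (S \<bullet> S) - 2 * \<alpha> * (S \<bullet> S) + card C * \<alpha>\<^sup>2" .
  have "(\<Sum>c\<in>C. norm (S - \<alpha> *\<^sub>R w c))
          \<le> (\<Sum>c\<in>C. ((S - \<alpha> *\<^sub>R w c) \<bullet> (S - \<alpha> *\<^sub>R w c) + \<alpha>\<^sup>2) / (2 * \<alpha>))"
    by (intro sum_mono am_gm)
  also have "\<dots> = card C * \<alpha> - (2 * \<alpha> - card C) * (S \<bullet> S) / (2 * \<alpha>)"
    using \<open>0 < \<alpha>\<close> by (simp add: sum_divide_distrib[symmetric] sum.distrib sum_sq field_simps power2_eq_square)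
  finally show ?thesis .
qed

lemma balanced_sum_norm_diff_scaleR_le:
  fixes w :: "nat \<Rightarrow> 'a::real_inner" and y :: "nat \<Rightarrow> nat" and N k n :: nat and \<alpha> :: real
  assumes labels: "\<forall>i\<in>{1..N}. y i \<in> {1..k}"
    and class_size: "\<forall>c\<in>{1..k}. card {i\<in>{1..N}. y i = c} = n"
    and N: "N = k * n" and unit_w: "\<forall>j\<in>{1..k}. norm (w j) = 1" and "0 < \<alpha>"
  defines "S \<equiv> \<Sum>j\<in>{1..k}. w j"
  shows "(\<Sum>i\<in>{1..N}. norm (S - \<alpha> *\<^sub>R w (y i))) + n * ((2 * \<alpha> - k) * (S \<bullet> S) / (2 * \<alpha>))
           \<le> N * \<alpha>"
proof -
  have "(\<Sum>i\<in>{1..N}. norm (S - \<alpha> *\<^sub>R w (y i))) = n * (\<Sum>c\<in>{1..k}. norm (S - \<alpha> *\<^sub>R w c))"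
    by (rule sum_over_balanced_labels[OF labels class_size])
  also have "\<dots> \<le> n * (k * \<alpha> - (2 * \<alpha> - k) * (S \<bullet> S) / (2 * \<alpha>))"
    using sum_norm_diff_scaleR_le[of "{1..k}" w \<alpha>] unit_w \<open>0 < \<alpha>\<close>
    by (intro mult_left_mono) (simp_all add: S_def)
  finally show ?thesis
    by (simp add: N algebra_simps)
qed

lemma
  fixes w z :: "nat \<Rightarrow> 'a::real_inner" and y :: "nat \<Rightarrow> nat" and N k n :: nat and \<alpha> :: real
  assumes labels: "\<forall>i\<in>{1..N}. y i \<in> {1..k}"
    and class_size: "\<forall>c\<in>{1..k}. card {i\<in>{1..N}. y i = c} = n"
    and N: "N = k * n"
    and unit_w: "\<forall>j\<in>{1..k}. norm (w j) = 1" and unit_z: "\<forall>i\<in>{1..N}. norm (z i) = 1"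
    and \<alpha>: "real k < 2 * \<alpha>"
  defines "S \<equiv> \<Sum>j\<in>{1..k}. w j"
  shows balanced_inner_sum_ge: "- (N * \<alpha>) \<le> (\<Sum>i\<in>{1..N}. (S - \<alpha> *\<^sub>R w (y i)) \<bullet> z i)"
    and balanced_inner_sum_eq_imp:
      "(\<Sum>i\<in>{1..N}. (S - \<alpha> *\<^sub>R w (y i)) \<bullet> z i) = - (N * \<alpha>) \<Longrightarrow> 1 \<le> n
        \<Longrightarrow> S = 0 \<and> (\<forall>i\<in>{1..N}. z i = w (y i))"
proof -
  define r where "r c = norm (S - \<alpha> *\<^sub>R w c)" for c
  define gap where "gap = (2 * \<alpha> - k) * (S \<bullet> S) / (2 * \<alpha>)"
  have "0 < \<alpha>"
    using \<alpha> by linarith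
  have gap: "0 \<le> gap"
    using \<alpha> by (simp add: gap_def)
  have cauchy_schwarz: "- r (y i) \<le> (S - \<alpha> *\<^sub>R w (y i)) \<bullet> z i" if "i \<in> {1..N}" for i
    using Cauchy_Schwarz_ineq2[of "S - \<alpha> *\<^sub>R w (y i)" "z i"] unit_z that by (auto simp: r_def)
  have upper: "- (N * \<alpha>) + n * gap \<le> (\<Sum>i\<in>{1..N}. - r (y i))"
    using balanced_sum_norm_diff_scaleR_le[OF labels class_size N unit_w \<open>0 < \<alpha>\<close>]
    by (simp add: r_def gap_def S_def sum_negf)
  also have lower: "\<dots> \<le> (\<Sum>i\<in>{1..N}. (S - \<alpha> *\<^sub>R w (y i)) \<bullet> z i)"
    by (intro sum_mono cauchy_schwarz)
  finally have bound: "- (N * \<alpha>) + n * gap \<le> (\<Sum>i\<in>{1..N}. (S - \<alpha> *\<^sub>R w (y i)) \<bullet> z i)" .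
  moreover have "0 \<le> n * gap"
    using gap by simp
  ultimately show "- (N * \<alpha>) \<le> (\<Sum>i\<in>{1..N}. (S - \<alpha> *\<^sub>R w (y i)) \<bullet> z i)"
    by linarith
  assume eq: "(\<Sum>i\<in>{1..N}. (S - \<alpha> *\<^sub>R w (y i)) \<bullet> z i) = - (N * \<alpha>)" and "1 \<le> n"
  have "n * gap \<le> 0"
    using bound eq by linarith
  with gap \<open>1 \<le> n\<close> have "gap = 0"
    by (simp add: mult_le_0_iff)
  then have "S = 0"
    using \<alpha> \<open>0 < \<alpha>\<close> by (simp add: gap_def)
  have "n * gap = 0"
    using \<open>gap = 0\<close> by simp
  with upper lower eq have tight: "(\<Sum>i\<in>{1..N}. - r (y i)) = (\<Sum>i\<in>{1..N}. (S - \<alpha> *\<^sub>R w (y i)) \<bullet> z i)"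
    by linarith
  have "z i = w (y i)" if i: "i \<in> {1..N}" for i
  proof -
    have "- r (y i) = (S - \<alpha> *\<^sub>R w (y i)) \<bullet> z i"
      using sum_mono_inv[OF tight cauchy_schwarz i] by simp
    then have "w (y i) \<bullet> z i = 1"
      using \<open>S = 0\<close> \<open>0 < \<alpha>\<close> unit_w labels i by (auto simp: r_def)
    then show ?thesis
      using norm_cauchy_schwarz_eq[of "w (y i)" "z i"] unit_w unit_z labels i by auto
  qed
  with \<open>S = 0\<close> show "S = 0 \<and> (\<forall>i\<in>{1..N}. z i = w (y i))"
    by blast
qed

section \<open>Simplex equiangular tight frames\<close>

lemma inner_eq_neg_inverse_if_sum_zero:
  fixes w :: "nat \<Rightarrow> 'a::real_inner"
  assumes "(\<Sum>j\<in>{1..k}. w j) = 0" "a \<in> {1..k}" "norm (w a) = 1"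
    and "\<forall>j\<in>{1..k} - {a}. w j \<bullet> w a = \<gamma>"
  shows "\<gamma> = - 1 / (real k - 1)"
proof -
  have "(real k - 1) * \<gamma> = (\<Sum>j\<in>{1..k} - {a}. w j \<bullet> w a)"
    using assms(2,4) by (simp add: of_nat_diff)
  also have "\<dots> = ((\<Sum>j\<in>{1..k}. w j) - w a) \<bullet> w a"
    using assms(2) by (simp add: sum_diff1 inner_diff_left inner_sum_left)
  also have "\<dots> = -1"
    using assms(1,3) by (simp add: norm_eq_1)
  finally show ?thesis
    by (cases "real k - 1 = 0") (simp_all add: field_simps)
qed

definition simplex_etf :: "nat \<Rightarrow> (nat \<Rightarrow> 'a::real_inner) \<Rightarrow> bool" where
  "simplex_etf k w \<longleftrightarrow> (\<forall>j\<in>{1..k}. norm (w j) = 1) \<and>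
     (\<forall>i\<in>{1..k}. \<forall>j\<in>{1..k}. i \<noteq> j \<longrightarrow> w i \<bullet> w j = - 1 / (real k - 1))"

lemma simplex_coefficients:
  fixes P A B C :: real
  assumes P: "1 \<le> P" and A: "A = sqrt ((P + 1) / P)" and B: "B = (1 / sqrt P - A) / P"
    and C: "C = - 1 / sqrt P"
  shows "2 * A * B + P * B * B = - 1 / P" and "A * A + (2 * A * B + P * B * B) = 1"
    and "C * (A + P * B) = - 1 / P" and "C * C * P = 1"
proof -
  have A2: "A * A = (P + 1) / P" and AB: "A + P * B = 1 / sqrt P"
    using P by (simp_all add: A B)
  have "P * (2 * A * B + P * B * B) = (A + P * B) * (A + P * B) - A * A"
    by (simp add: algebra_simps)
  also have "\<dots> = -1"
    unfolding AB A2 using P by (simp add: real_sqrt_mult_self field_simps flip: times_divide_eq_left)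
  finally show cross: "2 * A * B + P * B * B = - 1 / P"
    using P by (simp add: field_simps)
  show "A * A + (2 * A * B + P * B * B) = 1"
    unfolding A2 cross using P by (simp add: field_simps)
  show "C * (A + P * B) = - 1 / P"
    unfolding AB C using P by (simp add: real_sqrt_mult_self flip: times_divide_eq_left)
  show "C * C * P = 1"
    using P by (simp add: C)
qed

lemma simplex_etf_from_orthonormal:
  fixes e :: "nat \<Rightarrow> 'a::real_inner"
  assumes "1 \<le> p" and orthonormal: "\<forall>i\<in>{1..p}. \<forall>j\<in>{1..p}. e i \<bullet> e j = (if i = j then 1 else 0)"
  shows "\<exists>w :: nat \<Rightarrow> 'a. simplex_etf (p + 1) w"
proof -
  define P where "P = real p"
  define U where "U = (\<Sum>l\<in>{1..p}. e l)"
  define A where "A = sqrt ((P + 1) / P)"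
  define B where "B = (1 / sqrt P - A) / P"
  define C where "C = - 1 / sqrt P"
  define w where "w j = (if j \<le> p then A *\<^sub>R e j + B *\<^sub>R U else C *\<^sub>R U)" for j
  have "1 \<le> P"
    using assms by (simp add: P_def)
  note coefficients = simplex_coefficients[OF this A_def B_def C_def]
  have eU: "e j \<bullet> U = 1" "U \<bullet> e j = 1" if "j \<in> {1..p}" for j
    using orthonormal that by (simp_all add: U_def inner_sum_right inner_sum_left inner_commute)
  have UU: "U \<bullet> U = P"
    using eU by (simp add: U_def inner_sum_left P_def)
  have last: "w i \<bullet> w j = - 1 / P" if "i \<in> {1..p}" "j = p + 1" for i j
    using that eU UU coefficients(3) by (simp add: w_def inner_add_left algebra_simps)
  have "w i \<bullet> w j = (if i = j then 1 else - 1 / P)" if "i \<in> {1..p + 1}" "j \<in> {1..p + 1}" for i j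
  proof (cases "i \<le> p"; cases "j \<le> p")
    assume "i \<le> p" "j \<le> p"
    then have "w i \<bullet> w j = A * A * (e i \<bullet> e j) + (2 * A * B + P * B * B)"
      using that eU UU by (simp add: w_def inner_add_left inner_add_right algebra_simps)
    then show ?thesis
      using \<open>i \<le> p\<close> \<open>j \<le> p\<close> that orthonormal coefficients(1,2) by auto
  next
    assume "\<not> i \<le> p" "\<not> j \<le> p"
    then show ?thesis
      using that UU coefficients(4) by (simp add: w_def)
  qed (use that last[of i j] last[of j i] in \<open>auto simp: inner_commute\<close>)
  then have "simplex_etf (p + 1) w"
    by (auto simp: simplex_etf_def norm_eq_1 P_def)
  then show ?thesis
    by blast
qed

lemma orthonormal_axes_exist:
  assumes "p \<le> CARD('n::finite)"
  shows "\<exists>e :: nat \<Rightarrow> real^'n. \<forall>i\<in>{1..p}. \<forall>j\<in>{1..p}. e i \<bullet> e j = (if i = j then 1 else 0)"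
proof -
  obtain g :: "nat \<Rightarrow> 'n" where "inj_on g {1..p}"
    using card_le_inj[of "{1..p}" "UNIV :: 'n set"] assms by auto
  then have "\<forall>i\<in>{1..p}. \<forall>j\<in>{1..p}. axis (g i) 1 \<bullet> (axis (g j) 1 :: real^'n) = (if i = j then 1 else 0)"
    by (auto simp: inner_axis_axis dest: inj_onD)
  then show ?thesis
    by (intro exI[where x = "\<lambda>j. axis (g j) 1"])
qed

lemma simplex_etf_exists:
  assumes "2 \<le> k" "k \<le> CARD('n::finite) + 1"
  shows "\<exists>w :: nat \<Rightarrow> real^'n. simplex_etf k w"
proof -
  have "\<exists>e :: nat \<Rightarrow> real^'n. \<forall>i\<in>{1..k - 1}. \<forall>j\<in>{1..k - 1}. e i \<bullet> e j = (if i = j then 1 else 0)"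
    using assms by (intro orthonormal_axes_exist) simp
  then obtain e :: "nat \<Rightarrow> real^'n" where "\<forall>i\<in>{1..k - 1}. \<forall>j\<in>{1..k - 1}. e i \<bullet> e j = (if i = j then 1 else 0)"
    by blast
  moreover have "1 \<le> k - 1"
    using assms by simp
  ultimately show ?thesis
    using simplex_etf_from_orthonormal[of "k - 1" e] assms by simp
qed

section \<open>Margin functions\<close>

definition admissible_margin :: "(real \<Rightarrow> real) \<Rightarrow> bool" where
  "admissible_margin f \<longleftrightarrow> (\<forall>\<theta>\<in>{0..pi}. f \<theta> \<le> f 0 - (1 - cos \<theta>) / 2)"

lemma admissible_margin_if_le_cos:
  assumes "f 0 = 1" and "\<And>\<theta>. 0 \<le> \<theta> \<Longrightarrow> \<theta> \<le> pi \<Longrightarrow> f \<theta> \<le> cos \<theta>"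
  shows "admissible_margin f"
  unfolding admissible_margin_def
proof
  fix \<theta> :: real assume "\<theta> \<in> {0..pi}"
  then have "f \<theta> \<le> cos \<theta>"
    using assms(2) by simp
  then show "f \<theta> \<le> f 0 - (1 - cos \<theta>) / 2"
    using assms(1) cos_le_one[of \<theta>] by argo
qed

lemma admissible_margin_normface: "admissible_margin normface"
  by (rule admissible_margin_if_le_cos) (simp_all add: normface_def)

lemma admissible_margin_cosface: "admissible_margin (cosface m)"
  unfolding admissible_margin_def cosface_def using cos_le_one by (simp add: field_simps)

lemma admissible_margin_arcface:
  assumes "0 \<le> m" "m \<le> pi" "1 / 2 \<le> cos m"
  shows "admissible_margin (arcface m)"
  unfolding admissible_margin_def arcface_def
proof
  fix \<theta> :: real assume "\<theta> \<in> {0..pi}"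
  define u where "u = \<theta> / 2"
  then have \<theta>: "\<theta> = 2 * u"
    by simp
  have "0 \<le> sin u" "0 \<le> cos u"
    using \<open>\<theta> \<in> {0..pi}\<close> by (auto simp: u_def intro!: sin_ge_zero cos_ge_zero)
  moreover have "0 \<le> sin m"
    using assms by (simp add: sin_ge_zero)
  ultimately have "0 \<le> sin u * (2 * sin m * cos u + (2 * cos m - 1) * sin u)"
    using assms by (simp add: add_nonneg_nonneg)
  also have "\<dots> = cos (0 + m) - (1 - cos \<theta>) / 2 - cos (\<theta> + m)"
    unfolding \<theta> cos_add sin_double cos_double_sin by (simp add: algebra_simps power2_eq_square)
  finally show "cos (\<theta> + m) \<le> cos (0 + m) - (1 - cos \<theta>) / 2"
    by simp
qed

lemma asoftmax_le_cos:
  assumes "1 \<le> m" "0 \<le> \<theta>" "\<theta> \<le> pi"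
  shows "asoftmax m \<theta> \<le> cos \<theta>"
proof -
  define l where "l = min (m - 1) (nat \<lfloor>real m * \<theta> / pi\<rfloor>)"
  have asoftmax: "asoftmax m \<theta> = (-1) ^ l * cos (real m * \<theta>) - 2 * real l"
    by (simp add: asoftmax_def l_def Let_def)
  show ?thesis
  proof (cases "l = 0")
    case True
    then have "m = 1 \<or> real m * \<theta> / pi < 1"
      using assms by (auto simp: l_def min_def floor_less_iff split: if_splits)
    then have "m = 1 \<or> real m * \<theta> \<le> pi"
      by (auto simp: divide_less_eq)
    moreover have "\<theta> \<le> real m * \<theta>"
      using assms by (simp add: mult_le_cancel_right1)
    ultimately have "cos (real m * \<theta>) \<le> cos \<theta>"
      using assms by (auto intro: cos_monotone_0_pi_le)
    with True show ?thesis
      by (simp add: asoftmax)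
  next
    case False
    have "\<bar>(-1) ^ l * cos (real m * \<theta>)\<bar> \<le> 1"
      by (simp add: abs_mult)
    moreover have "1 \<le> real l"
      using False by simp
    ultimately show ?thesis
      using cos_ge_minus_one[of \<theta>] unfolding asoftmax abs_le_iff by linarith
  qed
qed

lemma admissible_margin_asoftmax:
  assumes "1 \<le> m"
  shows "admissible_margin (asoftmax m)"
proof (rule admissible_margin_if_le_cos)
  show "asoftmax m 0 = 1"
    by (simp add: asoftmax_def)
qed (use assms asoftmax_le_cos in auto)

section \<open>The risk lower bound and its equality case\<close>

lemma neg_ln_softmax:
  "- ln (exp (a::real) / (exp a + (\<Sum>j\<in>J. exp (b j)))) = ln (1 + (\<Sum>j\<in>J. exp (b j - a)))"
proof -
  have "0 \<le> (\<Sum>j\<in>J. exp (b j))"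
    by (simp add: sum_nonneg)
  then have "- ln (exp a / (exp a + (\<Sum>j\<in>J. exp (b j)))) = ln ((exp a + (\<Sum>j\<in>J. exp (b j))) / exp a)"
    by (simp add: ln_div add_pos_nonneg)
  also have "\<dots> = ln (1 + (\<Sum>j\<in>J. exp (b j - a)))"
    by (simp add: add_divide_distrib sum_divide_distrib exp_diff)
  finally show ?thesis .
qed

definition risk_bound :: "(real \<Rightarrow> real) \<Rightarrow> real \<Rightarrow> nat \<Rightarrow> real" where
  "risk_bound f s k = ln (1 + (real k - 1) * exp (s * (- 1 / (real k - 1) - f 0)))"

lemma emp_risk_simplex_etf:
  fixes w :: "nat \<Rightarrow> real^'n::finite"
  assumes etf: "simplex_etf k w" and "2 \<le> k" "1 \<le> N"
    and labels: "\<forall>i\<in>{1..N}. y i \<in> {1..k}" and features: "\<forall>i\<in>{1..N}. z i = w (y i)"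
  shows "emp_risk f s k N y w z = risk_bound f s k"
proof -
  have sample: "- ln (exp (s * f (arccos (w (y i) \<bullet> z i))) /
              (exp (s * f (arccos (w (y i) \<bullet> z i)))
               + (\<Sum>j\<in>{1..k} - {y i}. exp (s * cos (arccos (w j \<bullet> z i))))))
          = risk_bound f s k" if "i \<in> {1..N}" for i
  proof -
    have "y i \<in> {1..k}" "z i = w (y i)"
      using labels features that by auto
    then have correct: "w (y i) \<bullet> z i = 1" and wrong: "\<And>j. j \<in> {1..k} - {y i} \<Longrightarrow> w j \<bullet> z i = - 1 / (real k - 1)"
      using etf by (auto simp: simplex_etf_def norm_eq_1)
    have "\<bar>- 1 / (real k - 1)\<bar> \<le> 1"
      using \<open>2 \<le> k\<close> by simp
    then have wrong_cos: "cos (arccos (w j \<bullet> z i)) = - 1 / (real k - 1)" if "j \<in> {1..k} - {y i}" for j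
      unfolding wrong[OF that] by (rule cos_arccos_abs)
    have "(\<Sum>j\<in>{1..k} - {y i}. exp (s * cos (arccos (w j \<bullet> z i)) - s * f (arccos (w (y i) \<bullet> z i))))
        = (real k - 1) * exp (s * (- 1 / (real k - 1) - f 0))"
      using \<open>y i \<in> {1..k}\<close> \<open>2 \<le> k\<close> by (simp add: correct wrong_cos right_diff_distrib of_nat_diff)
    then show ?thesis
      by (simp add: neg_ln_softmax risk_bound_def)
  qed
  show ?thesis
    using \<open>1 \<le> N\<close> unfolding emp_risk_def by (subst sum.cong[OF refl sample]) simp_all
qed

locale balanced_sphere_problem =
  fixes f :: "real \<Rightarrow> real" and s :: real and k N n :: nat and y :: "nat \<Rightarrow> nat"
    and w z :: "nat \<Rightarrow> real^'d::finite"
  assumes margin: "admissible_margin f" and s_pos: "0 < s" and two_le_k: "2 \<le> k"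
    and n_pos: "1 \<le> n" and N_eq: "N = k * n"
    and labels: "\<forall>i\<in>{1..N}. y i \<in> {1..k}"
    and class_size: "\<forall>c\<in>{1..k}. card {i\<in>{1..N}. y i = c} = n"
    and sphere: "on_sphere k N w z"
begin

lemma unit_w: "\<forall>j\<in>{1..k}. norm (w j) = 1" and unit_z: "\<forall>i\<in>{1..N}. norm (z i) = 1"
  using sphere by (simp_all add: on_sphere_def)

lemma inner_bounds:
  assumes "j \<in> {1..k}" "i \<in> {1..N}"
  shows "\<bar>w j \<bullet> z i\<bar> \<le> 1"
  using Cauchy_Schwarz_ineq2[of "w j" "z i"] unit_w unit_z assms by simp

definition mean_gap :: "nat \<Rightarrow> real" where
  "mean_gap i = (\<Sum>j\<in>{1..k} - {y i}. w j \<bullet> z i) / (real k - 1) - f (arccos (w (y i) \<bullet> z i))"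

lemma mean_gap_ge:
  assumes i: "i \<in> {1..N}"
  defines "S \<equiv> \<Sum>j\<in>{1..k}. w j" and "K \<equiv> real k - 1"
  shows "(S - (1 + K / 2) *\<^sub>R w (y i)) \<bullet> z i / K + 1 / 2 - f 0 \<le> mean_gap i"
proof -
  define t where "t = w (y i) \<bullet> z i"
  have "0 < K"
    using two_le_k by (simp add: K_def)
  have "y i \<in> {1..k}"
    using labels i by auto
  then have "\<bar>t\<bar> \<le> 1"
    using inner_bounds i by (simp add: t_def)
  then have "arccos t \<in> {0..pi}"
    by (simp add: arccos_lbound arccos_ubound abs_le_iff)
  then have "f (arccos t) \<le> f 0 - (1 - cos (arccos t)) / 2"
    using margin unfolding admissible_margin_def by blast
  then have "f (arccos t) \<le> f 0 - (1 - t) / 2"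
    using cos_arccos_abs[OF \<open>\<bar>t\<bar> \<le> 1\<close>] by simp
  moreover have "(\<Sum>j\<in>{1..k} - {y i}. w j \<bullet> z i) = (S - w (y i)) \<bullet> z i"
    using \<open>y i \<in> {1..k}\<close> by (simp add: S_def sum_diff1 inner_diff_left inner_sum_left)
  then have "mean_gap i = (S - w (y i)) \<bullet> z i / K - f (arccos t)"
    by (simp add: mean_gap_def K_def t_def)
  moreover have "(S - (1 + K / 2) *\<^sub>R w (y i)) \<bullet> z i = (S - w (y i)) \<bullet> z i - K / 2 * t"
    by (simp add: t_def inner_diff_left field_simps)
  then have "(S - (1 + K / 2) *\<^sub>R w (y i)) \<bullet> z i / K = (S - w (y i)) \<bullet> z i / K - t / 2"
    using \<open>0 < K\<close> by (simp add: diff_divide_distrib)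
  ultimately show ?thesis
    by argo
qed

lemma
  defines "S \<equiv> \<Sum>j\<in>{1..k}. w j"
  shows sum_mean_gap_ge: "- (N * (1 / (real k - 1) + f 0)) \<le> (\<Sum>i\<in>{1..N}. mean_gap i)"
    and sum_mean_gap_eq_imp: "(\<Sum>i\<in>{1..N}. mean_gap i) = - (N * (1 / (real k - 1) + f 0))
      \<Longrightarrow> S = 0 \<and> (\<forall>i\<in>{1..N}. z i = w (y i))"
proof -
  define K where "K = real k - 1"
  define \<alpha> where "\<alpha> = 1 + K / 2"
  define g where "g i = (S - \<alpha> *\<^sub>R w (y i)) \<bullet> z i" for i
  have "0 < K"
    using two_le_k by (simp add: K_def)
  have gap_ge: "g i / K + 1 / 2 - f 0 \<le> mean_gap i" if "i \<in> {1..N}" for i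
    unfolding g_def \<alpha>_def K_def S_def by (rule mean_gap_ge[OF that])
  define G where "G = (\<Sum>i\<in>{1..N}. g i)"
  have "real k < 2 * \<alpha>"
    by (simp add: \<alpha>_def K_def field_simps)
  then have "- (N * \<alpha>) \<le> G"
    unfolding G_def g_def S_def by (rule balanced_inner_sum_ge[OF labels class_size N_eq unit_w unit_z])
  then have excess: "0 \<le> (G + N * \<alpha>) / K"
    using \<open>0 < K\<close> by simp
  have "- (N * (1 / K + f 0)) + (G + N * \<alpha>) / K = G / K + N * (1 / 2 - f 0)"
    using \<open>0 < K\<close> by (simp add: \<alpha>_def field_simps)
  also have "\<dots> = (\<Sum>i\<in>{1..N}. g i / K + 1 / 2 - f 0)"
    by (simp add: G_def sum.distrib sum_subtractf sum_divide_distrib right_diff_distrib)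
  also have "\<dots> \<le> (\<Sum>i\<in>{1..N}. mean_gap i)"
    by (intro sum_mono gap_ge)
  finally have lower: "- (N * (1 / K + f 0)) + (G + N * \<alpha>) / K \<le> (\<Sum>i\<in>{1..N}. mean_gap i)" .
  with excess show "- (N * (1 / (real k - 1) + f 0)) \<le> (\<Sum>i\<in>{1..N}. mean_gap i)"
    unfolding K_def by linarith
  assume "(\<Sum>i\<in>{1..N}. mean_gap i) = - (N * (1 / (real k - 1) + f 0))"
  with lower excess have "(G + N * \<alpha>) / K = 0"
    unfolding K_def by linarith
  then have "(\<Sum>i\<in>{1..N}. g i) = - (N * \<alpha>)"
    using \<open>0 < K\<close> by (simp add: G_def add_eq_0_iff)
  then show "S = 0 \<and> (\<forall>i\<in>{1..N}. z i = w (y i))"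
    unfolding g_def S_def
    using balanced_inner_sum_eq_imp[OF labels class_size N_eq unit_w unit_z \<open>real k < 2 * \<alpha>\<close> _ n_pos]
    by blast
qed

definition sample_loss :: "nat \<Rightarrow> real" where
  "sample_loss i = ln (1 + (\<Sum>j\<in>{1..k} - {y i}. exp (s * (w j \<bullet> z i - f (arccos (w (y i) \<bullet> z i))))))"

lemma emp_risk_eq_mean_sample_loss: "emp_risk f s k N y w z = (\<Sum>i\<in>{1..N}. sample_loss i) / N"
proof -
  have sample: "- ln (exp (s * f (arccos (w (y i) \<bullet> z i))) /
              (exp (s * f (arccos (w (y i) \<bullet> z i)))
               + (\<Sum>j\<in>{1..k} - {y i}. exp (s * cos (arccos (w j \<bullet> z i))))))
          = sample_loss i" if "i \<in> {1..N}" for i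
  proof -
    have "cos (arccos (w j \<bullet> z i)) = w j \<bullet> z i" if "j \<in> {1..k}" for j
      using inner_bounds[OF that \<open>i \<in> {1..N}\<close>] by (rule cos_arccos_abs)
    then show ?thesis
      by (simp add: neg_ln_softmax sample_loss_def right_diff_distrib)
  qed
  show ?thesis
    unfolding emp_risk_def by (subst sum.cong[OF refl sample]) simp_all
qed

(* The common value of s * mean_gap i when w is a simplex ETF and z i = w (y i). *)
definition tangent_point :: real where
  "tangent_point = s * (- 1 / (real k - 1) - f 0)"

definition tangent_slope :: real where
  "tangent_slope = (real k - 1) * exp tangent_point / (1 + (real k - 1) * exp tangent_point)"

definition sample_tangent :: "nat \<Rightarrow> real" where
  "sample_tangent i = risk_bound f s k + tangent_slope * (s * mean_gap i - tangent_point)"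

lemma
  assumes "i \<in> {1..N}"
  shows sample_tangent_le_sample_loss: "sample_tangent i \<le> sample_loss i"
    and sample_loss_eq_sample_tangent_imp: "sample_loss i = sample_tangent i \<Longrightarrow> j \<in> {1..k} - {y i}
      \<Longrightarrow> w j \<bullet> z i - f (arccos (w (y i) \<bullet> z i)) = mean_gap i"
proof -
  define J where "J = {1..k} - {y i}"
  define K where "K = real k - 1"
  define u where "u j = s * (w j \<bullet> z i - f (arccos (w (y i) \<bullet> z i)))" for j
  define A where "A = (\<Sum>j\<in>J. w j \<bullet> z i)"
  define F where "F = f (arccos (w (y i) \<bullet> z i))"
  have "y i \<in> {1..k}"
    using labels assms by auto
  then have card: "real (card J) = K"
    using two_le_k by (simp add: J_def K_def of_nat_diff)
  moreover have "0 < K"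
    using two_le_k by (simp add: K_def)
  ultimately have "J \<noteq> {}"
    by auto
  have sum_u: "sum u J = s * A - s * K * F"
    by (simp add: u_def A_def F_def sum_distrib_left[symmetric] sum_subtractf card right_diff_distrib)
  have gap: "mean_gap i = A / K - F"
    by (simp add: mean_gap_def A_def F_def J_def K_def)
  have mean: "sum u J / card J = s * mean_gap i"
    unfolding card sum_u gap using \<open>0 < K\<close> by (simp add: field_simps)
  have "finite J"
    by (simp add: J_def)
  note tangent = ln_one_plus_sum_exp_above_tangent[OF \<open>finite J\<close> \<open>J \<noteq> {}\<close>,
      where u = u and x\<^sub>0 = tangent_point, unfolded mean, unfolded card]
  have loss: "sample_loss i = ln (1 + (\<Sum>j\<in>J. exp (u j)))"
    by (simp add: sample_loss_def J_def u_def)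
  have tangent_eq: "sample_tangent i = ln (1 + K * exp tangent_point)
      + K * exp tangent_point / (1 + K * exp tangent_point) * (s * mean_gap i - tangent_point)"
    by (simp add: sample_tangent_def tangent_slope_def risk_bound_def tangent_point_def K_def)
  show "sample_tangent i \<le> sample_loss i"
    unfolding loss tangent_eq by (rule tangent(1))
  assume "sample_loss i = sample_tangent i" "j \<in> {1..k} - {y i}"
  then have "u j = s * mean_gap i"
    unfolding loss tangent_eq J_def[symmetric] by (rule tangent(2))
  then show "w j \<bullet> z i - f (arccos (w (y i) \<bullet> z i)) = mean_gap i"
    using s_pos by (simp add: u_def)
qed

lemma
  shows sum_sample_tangent_ge: "N * risk_bound f s k \<le> (\<Sum>i\<in>{1..N}. sample_tangent i)"
    and sum_sample_tangent_eq_imp: "(\<Sum>i\<in>{1..N}. sample_tangent i) = N * risk_bound f s k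
      \<Longrightarrow> (\<Sum>i\<in>{1..N}. mean_gap i) = - (N * (1 / (real k - 1) + f 0))"
proof -
  have "0 < tangent_slope"
    using two_le_k by (simp add: tangent_slope_def add_pos_pos)
  have "(\<Sum>i\<in>{1..N}. sample_tangent i) = N * risk_bound f s k
      + tangent_slope * s * ((\<Sum>i\<in>{1..N}. mean_gap i) + N * (1 / (real k - 1) + f 0))"
    by (simp add: sample_tangent_def tangent_point_def sum.distrib sum_subtractf
        sum_distrib_left[symmetric] algebra_simps)
  moreover have "0 \<le> (\<Sum>i\<in>{1..N}. mean_gap i) + N * (1 / (real k - 1) + f 0)"
    using sum_mean_gap_ge by linarith
  ultimately show "N * risk_bound f s k \<le> (\<Sum>i\<in>{1..N}. sample_tangent i)"
    "(\<Sum>i\<in>{1..N}. sample_tangent i) = N * risk_bound f s k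
      \<Longrightarrow> (\<Sum>i\<in>{1..N}. mean_gap i) = - (N * (1 / (real k - 1) + f 0))"
    using \<open>0 < tangent_slope\<close> s_pos by auto
qed

lemma N_pos: "0 < N"
  using two_le_k n_pos by (simp add: N_eq)

lemma risk_bound_le_emp_risk: "risk_bound f s k \<le> emp_risk f s k N y w z"
proof -
  have "N * risk_bound f s k \<le> (\<Sum>i\<in>{1..N}. sample_tangent i)"
    by (rule sum_sample_tangent_ge)
  also have "\<dots> \<le> (\<Sum>i\<in>{1..N}. sample_loss i)"
    by (intro sum_mono sample_tangent_le_sample_loss)
  finally show ?thesis
    using N_pos by (simp add: emp_risk_eq_mean_sample_loss field_simps)
qed

lemma emp_risk_eq_risk_bound_imp:
  assumes "emp_risk f s k N y w z = risk_bound f s k"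
  shows "simplex_etf k w \<and> (\<forall>i\<in>{1..N}. z i = w (y i))"
proof -
  have "(\<Sum>i\<in>{1..N}. sample_loss i) = N * risk_bound f s k"
    using assms N_pos by (simp add: emp_risk_eq_mean_sample_loss field_simps)
  moreover have "(\<Sum>i\<in>{1..N}. sample_tangent i) \<le> (\<Sum>i\<in>{1..N}. sample_loss i)"
    by (intro sum_mono sample_tangent_le_sample_loss)
  ultimately have tight: "(\<Sum>i\<in>{1..N}. sample_tangent i) = (\<Sum>i\<in>{1..N}. sample_loss i)"
    and "(\<Sum>i\<in>{1..N}. sample_tangent i) = N * risk_bound f s k"
    using sum_sample_tangent_ge by linarith+
  then have "(\<Sum>j\<in>{1..k}. w j) = 0" and features: "\<forall>i\<in>{1..N}. z i = w (y i)"
    using sum_mean_gap_eq_imp sum_sample_tangent_eq_imp by blast+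
  have "w b \<bullet> w a = - 1 / (real k - 1)" if "a \<in> {1..k}" "b \<in> {1..k}" "a \<noteq> b" for a b
  proof -
    have "card {i\<in>{1..N}. y i = a} \<noteq> 0"
      using class_size n_pos \<open>a \<in> {1..k}\<close> by simp
    then obtain i where i: "i \<in> {1..N}" "y i = a"
      by (auto simp: card_eq_0_iff)
    have "sample_loss i = sample_tangent i"
      using sum_mono_inv[OF tight sample_tangent_le_sample_loss i(1)] by simp
    then have "\<forall>j\<in>{1..k} - {a}. w j \<bullet> w a = f (arccos (w a \<bullet> w a)) + mean_gap i"
      using sample_loss_eq_sample_tangent_imp[OF i(1)] features i by force
    then have "f (arccos (w a \<bullet> w a)) + mean_gap i = - 1 / (real k - 1)"
      using inner_eq_neg_inverse_if_sum_zero \<open>(\<Sum>j\<in>{1..k}. w j) = 0\<close> \<open>a \<in> {1..k}\<close> unit_w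
      by blast
    with \<open>\<forall>j\<in>{1..k} - {a}. _\<close> that show ?thesis
      by simp
  qed
  then show ?thesis
    using unit_w features by (auto simp: simplex_etf_def)
qed

end

lemma is_minimizer_iff_simplex_etf:
  fixes w z :: "nat \<Rightarrow> real^'n::finite"
  assumes margin: "admissible_margin f" and s: "0 < s" and k: "2 \<le> k" "k \<le> CARD('n) + 1"
    and n: "1 \<le> n" "N = k * n" "\<forall>c\<in>{1..k}. card {i\<in>{1..N}. y i = c} = n"
    and labels: "\<forall>i\<in>{1..N}. y i \<in> {1..k}"
  shows "is_minimizer f s k N y w z \<longleftrightarrow>
           on_sphere k N w z \<and> simplex_etf k w \<and> (\<forall>i\<in>{1..N}. z i = w (y i))"
proof -
  have problem: "balanced_sphere_problem f s k N n y w' z'"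
    if "on_sphere k N w' z'" for w' z' :: "nat \<Rightarrow> real^'n"
    using margin s k n labels that by (simp add: balanced_sphere_problem_def)
  have "1 \<le> N"
    using n k by simp
  obtain w\<^sub>0 :: "nat \<Rightarrow> real^'n" where "simplex_etf k w\<^sub>0"
    using simplex_etf_exists k by blast
  then have optimum: "emp_risk f s k N y w\<^sub>0 (w\<^sub>0 \<circ> y) = risk_bound f s k"
    by (intro emp_risk_simplex_etf[OF _ k(1) \<open>1 \<le> N\<close> labels]) simp_all
  have "on_sphere k N w\<^sub>0 (w\<^sub>0 \<circ> y)"
    using \<open>simplex_etf k w\<^sub>0\<close> labels by (auto simp: on_sphere_def simplex_etf_def)
  show ?thesis
  proof
    assume minimizer: "is_minimizer f s k N y w z"
    then have sphere: "on_sphere k N w z"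
      by (simp add: is_minimizer_def)
    have "emp_risk f s k N y w z \<le> emp_risk f s k N y w\<^sub>0 (w\<^sub>0 \<circ> y)"
      using minimizer \<open>on_sphere k N w\<^sub>0 (w\<^sub>0 \<circ> y)\<close> unfolding is_minimizer_def by blast
    moreover have "risk_bound f s k \<le> emp_risk f s k N y w z"
      by (rule balanced_sphere_problem.risk_bound_le_emp_risk[OF problem[OF sphere]])
    ultimately have "emp_risk f s k N y w z = risk_bound f s k"
      using optimum by linarith
    with sphere show "on_sphere k N w z \<and> simplex_etf k w \<and> (\<forall>i\<in>{1..N}. z i = w (y i))"
      using balanced_sphere_problem.emp_risk_eq_risk_bound_imp[OF problem[OF sphere]] by blast
  next
    assume "on_sphere k N w z \<and> simplex_etf k w \<and> (\<forall>i\<in>{1..N}. z i = w (y i))"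
    then have "on_sphere k N w z" "emp_risk f s k N y w z = risk_bound f s k"
      using emp_risk_simplex_etf[OF _ k(1) \<open>1 \<le> N\<close> labels] by blast+
    then show "is_minimizer f s k N y w z"
      unfolding is_minimizer_def
      using balanced_sphere_problem.risk_bound_le_emp_risk[OF problem] by auto
  qed
qed

theorem proposition2:
  fixes f :: "real \<Rightarrow> real" and s :: real and k N :: nat and y :: "nat \<Rightarrow> nat"
    and w z :: "nat \<Rightarrow> real^'n::finite"
  assumes d: "CARD('n) \<ge> 2"
    and k: "2 \<le> k" "k \<le> CARD('n) + 1"
    and labels: "\<forall>i\<in>{1..N}. y i \<in> {1..k}"
    and balanced: "\<exists>n\<ge>1. N = k * n \<and> (\<forall>c\<in>{1..k}. card {i\<in>{1..N}. y i = c} = n)"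
    and s: "s > 0"
    and f: "f = normface
          \<or> (\<exists>m::real. m \<ge> 0 \<and> f = cosface m)
          \<or> (\<exists>m::real. 0 \<le> m \<and> m \<le> pi / 2 \<and> cos m \<ge> 1 / 2 \<and> f = arcface m)
          \<or> (\<exists>m::nat. m \<ge> 1 \<and> f = asoftmax m)"
  shows "is_minimizer f s k N y w z \<longleftrightarrow>
           on_sphere k N w z \<and>
           (\<forall>i\<in>{1..k}. \<forall>j\<in>{1..k}. i \<noteq> j \<longrightarrow> w i \<bullet> w j = - 1 / (real k - 1)) \<and>
           (\<forall>i\<in>{1..N}. z i = w (y i))"
proof -
  obtain n where n: "1 \<le> n" "N = k * n" "\<forall>c\<in>{1..k}. card {i\<in>{1..N}. y i = c} = n"
    using balanced by blast
  have "admissible_margin f"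
    using f by (elim disjE exE conjE)
      (simp_all add: admissible_margin_normface admissible_margin_cosface
        admissible_margin_arcface admissible_margin_asoftmax)
  then have "is_minimizer f s k N y w z \<longleftrightarrow>
      on_sphere k N w z \<and> simplex_etf k w \<and> (\<forall>i\<in>{1..N}. z i = w (y i))"
    using is_minimizer_iff_simplex_etf s k n labels by blast
  then show ?thesis
    by (auto simp: simplex_etf_def on_sphere_def)
qed

end
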